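(* Let $B=\mathrm{GF}(p^m)$ and $F=\mathrm{GF}(p^{mt})$. For $u,\alpha\in F$ let $p_{u,\alpha}(x)=\dfrac{\mathrm{Tr}_{F/B}\big(u(x-\alpha)\big)}{x-\alpha}\in F[x]$, and for distinct $\alpha,\beta\in F$ let $Q_{\alpha,\beta}(z)=\mathrm{Tr}_{F/B}\big(z(\beta-\alpha)\big)$. Let $\alpha,\beta\in F$ be distinct and let $z^*\in F$ be a root of $Q_{\alpha,\beta}(z)$ (equivalently of $Q_{\beta,\alpha}(z)$). Then (a) $p_{z^*,\alpha}(\beta)=0$. Moreover, if $t$ is divisible by the characteristic $p$ of $F$ and $B$, then (b) for every $u\in F$, $p_{u,\alpha}(\beta)$ is a root of both $Q_{\alpha,\beta}(z)$ and $Q_{\beta,\alpha}(z)$.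
   Context: $\mathrm{Tr}_{F/B}(x)=\sum_{i=0}^{t-1}x^{|B|^i}$ is the field trace from $F$ to $B$, viewed as a polynomial in $x$; $\mathrm{Tr}_{F/B}(u(x-\alpha))$ is divisible by $x-\alpha$ in $F[x]$, so $p_{u,\alpha}$ is a polynomial (of degree $|B|^{t-1}-1$ when $u\ne0$). *)

theory Defs
  imports "HOL-Computational_Algebra.Polynomial"
begin

text \<open>F is the finite field type 'a with |F| = p^(m t); B = GF(p^m) is its subfield of
  order q = p^m, and Tr_{F/B}(x) = sum_{i<t} x^(q^i).\<close>

definition field_trace :: "nat \<Rightarrow> nat \<Rightarrow> 'a::field \<Rightarrow> 'a" where
  "field_trace q t x = (\<Sum>i<t. x ^ (q ^ i))"

definition trace_poly :: "nat \<Rightarrow> nat \<Rightarrow> 'a::field poly \<Rightarrow> 'a poly" where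
  "trace_poly q t f = (\<Sum>i<t. f ^ (q ^ i))"

definition p_poly :: "nat \<Rightarrow> nat \<Rightarrow> 'a::field \<Rightarrow> 'a \<Rightarrow> 'a poly" where
  "p_poly q t u \<alpha> = trace_poly q t (smult u [:-\<alpha>, 1:]) div [:-\<alpha>, 1:]"

definition Q_fun :: "nat \<Rightarrow> nat \<Rightarrow> 'a::field \<Rightarrow> 'a \<Rightarrow> 'a \<Rightarrow> 'a" where
  "Q_fun q t \<alpha> \<beta> z = field_trace q t (z * (\<beta> - \<alpha>))"

end

theory Submission
  imports Defs "HOL-Computational_Algebra.Primes"
begin

text \<open>Evaluating \<open>p_{u,\<alpha>}\<close> at \<open>\<beta>\<close> gives \<open>Tr(u(\<beta>-\<alpha>))/(\<beta>-\<alpha>)\<close>, which settles (a) and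
  shows that \<open>Q_{\<alpha>,\<beta>}(p_{u,\<alpha>}(\<beta>))\<close> is the trace of a trace value \<open>s\<close>. Since \<open>x^(q^t) = x\<close>
  in \<open>F\<close>, the Frobenius map \<open>x \<mapsto> x^q\<close> permutes the summands of a trace cyclically, so it
  fixes \<open>s\<close> and hence \<open>Tr(s) = t s\<close>, which vanishes when \<open>p\<close> divides \<open>t\<close>. Finally
  \<open>Q_{\<beta>,\<alpha>} = -Q_{\<alpha>,\<beta>}\<close> because the Frobenius map, and hence the trace, is additive.\<close>

text \<open>The library version \<open>finite_field_power_card_eq_same\<close> needs the sort \<open>finite_field\<close>,
  which is not implied by \<open>{field,finite}\<close>.\<close>

lemma finite_field_power_card_minus_one:
  fixes x :: "'a::{field,finite}"
  assumes "x \<noteq> 0"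
  shows "x ^ (card (UNIV :: 'a set) - 1) = 1"
proof -
  let ?U = "UNIV - {0} :: 'a set"
  have "x ^ card ?U * (\<Prod>y\<in>?U. y) = (\<Prod>y\<in>?U. x * y)"
    by (simp add: prod.distrib)
  also have "\<dots> = (\<Prod>y\<in>?U. y)"
    by (rule prod.reindex_bij_witness[of _ "\<lambda>y. y / x" "\<lambda>y. x * y"]) (use assms in auto)
  finally have "x ^ card ?U = 1"
    by simp
  moreover have "card ?U = card (UNIV :: 'a set) - 1"
    by (simp add: card_Diff_singleton)
  ultimately show ?thesis
    by simp
qed

lemma finite_field_power_card_eq_self:
  fixes x :: "'a::{field,finite}"
  shows "x ^ card (UNIV :: 'a set) = x"
proof (cases "x = 0")
  case False
  have "card (UNIV :: 'a set) = Suc (card (UNIV :: 'a set) - 1)"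
    using finite_UNIV_card_ge_0[where ?'a = 'a] by simp
  then show ?thesis
    using finite_field_power_card_minus_one[OF False] by (metis power_Suc mult.right_neutral)
qed (use finite_UNIV_card_ge_0[where ?'a = 'a] in simp)

lemma prime_char_power_uminus:
  fixes x :: "'a::comm_ring_1"
  assumes "prime CHAR('a)"
  shows "(- x) ^ (CHAR('a) ^ n) = - (x ^ (CHAR('a) ^ n))"
proof -
  have "0 = (x + - x) ^ (CHAR('a) ^ n)"
    using assms by (simp add: prime_gt_0_nat zero_power)
  also have "\<dots> = x ^ (CHAR('a) ^ n) + (- x) ^ (CHAR('a) ^ n)"
    using assms by (rule freshmans_dream') simp
  finally show ?thesis
    by (simp add: eq_neg_iff_add_eq_0 add.commute)
qed

lemma field_trace_uminus:
  fixes x :: "'a::field"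
  assumes "prime CHAR('a)" and "q = CHAR('a) ^ m"
  shows "field_trace q t (- x) = - field_trace q t x"
  using prime_char_power_uminus[OF assms(1), of x "m * _"] assms(2)
  by (simp add: field_trace_def power_mult sum_negf)

lemma field_trace_power_eq_self:
  fixes x :: "'a::field"
  assumes "prime CHAR('a)" and "q = CHAR('a) ^ m" and "x ^ (q ^ t) = x"
  shows "field_trace q t x ^ q = field_trace q t x"
proof -
  let ?c = "\<lambda>i. x ^ (q ^ i)"
  have "field_trace q t x ^ q = (\<Sum>i<t. ?c (Suc i))"
    unfolding field_trace_def freshmans_dream_sum'[OF assms(1,2)]
    by (simp add: mult.commute flip: power_mult)
  also have "\<dots> = (\<Sum>i<Suc t. ?c i) - ?c 0"
    by (subst sum.lessThan_Suc_shift) simp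
  also have "\<dots> = (\<Sum>i<t. ?c i) + ?c t - ?c 0"
    by simp
  also have "?c t = ?c 0"
    using assms(3) by simp
  finally show ?thesis
    unfolding field_trace_def by simp
qed

lemma field_trace_of_power_eq_self:
  fixes y :: "'a::field"
  assumes "y ^ q = y"
  shows "field_trace q t y = of_nat t * y"
proof -
  have "y ^ (q ^ i) = y" for i
    by (induction i) (use assms in \<open>simp_all add: power_mult power_Suc2\<close>)
  then show ?thesis
    by (simp add: field_trace_def)
qed

lemma field_trace_field_trace:
  fixes x :: "'a::field"
  assumes "prime CHAR('a)" and "q = CHAR('a) ^ m" and "x ^ (q ^ t) = x"
  shows "field_trace q t (field_trace q t x) = of_nat t * field_trace q t x"
  using field_trace_of_power_eq_self field_trace_power_eq_self[OF assms] .

lemma Q_fun_swap: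
  fixes \<alpha> \<beta> z :: "'a::field"
  assumes "prime CHAR('a)" and "q = CHAR('a) ^ m"
  shows "Q_fun q t \<beta> \<alpha> z = - Q_fun q t \<alpha> \<beta> z"
  using field_trace_uminus[OF assms, of t "z * (\<beta> - \<alpha>)"]
  by (simp add: Q_fun_def algebra_simps)

lemma poly_trace_poly:
  "poly (trace_poly q t f) x = (\<Sum>i<t. poly f x ^ (q ^ i))"
  unfolding trace_poly_def by (simp add: poly_sum poly_power)

lemma poly_p_poly:
  fixes \<alpha> \<beta> :: "'a::field"
  assumes "q > 0" and "\<alpha> \<noteq> \<beta>"
  shows "poly (p_poly q t u \<alpha>) \<beta> = field_trace q t (u * (\<beta> - \<alpha>)) / (\<beta> - \<alpha>)"
proof -
  let ?g = "trace_poly q t (smult u [:-\<alpha>, 1:])"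
  have "poly ?g \<alpha> = 0"
    using assms(1) by (simp add: poly_trace_poly power_0_left)
  then obtain h where h: "?g = [:-\<alpha>, 1:] * h"
    by (auto simp: poly_eq_0_iff_dvd elim: dvdE)
  have "p_poly q t u \<alpha> = h"
    unfolding p_poly_def h by (subst nonzero_mult_div_cancel_left) auto
  moreover have "(\<beta> - \<alpha>) * poly h \<beta> = field_trace q t (u * (\<beta> - \<alpha>))"
    using arg_cong[OF h, of "\<lambda>f. poly f \<beta>"]
    by (simp add: poly_trace_poly field_trace_def algebra_simps)
  ultimately show ?thesis
    using assms(2) by (simp add: field_simps)
qed

theorem lemma3:
  fixes p m t :: nat and \<alpha> \<beta> z :: "'a::{field,finite}"
  assumes "prime p" and "CHAR('a) = p" and "m > 0" and "t > 0"
    and "card (UNIV :: 'a set) = p ^ (m * t)"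
    and "\<alpha> \<noteq> \<beta>"
    and "Q_fun (p ^ m) t \<alpha> \<beta> z = 0"
  shows "poly (p_poly (p ^ m) t z \<alpha>) \<beta> = 0
     \<and> (p dvd t \<longrightarrow>
          (\<forall>u. Q_fun (p ^ m) t \<alpha> \<beta> (poly (p_poly (p ^ m) t u \<alpha>) \<beta>) = 0
             \<and> Q_fun (p ^ m) t \<beta> \<alpha> (poly (p_poly (p ^ m) t u \<alpha>) \<beta>) = 0))"
proof -
  have char: "prime CHAR('a)" "p ^ m = CHAR('a) ^ m"
    using assms(1,2) by simp_all
  have eval: "poly (p_poly (p ^ m) t u \<alpha>) \<beta> = field_trace (p ^ m) t (u * (\<beta> - \<alpha>)) / (\<beta> - \<alpha>)"
    for u
    using assms(1,6) by (intro poly_p_poly) (simp_all add: prime_gt_0_nat)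
  have frobenius_period: "x ^ ((p ^ m) ^ t) = x" for x :: 'a
    using finite_field_power_card_eq_self[of x] assms(5) by (simp flip: power_mult)
  have Q_eval: "Q_fun (p ^ m) t \<alpha> \<beta> (poly (p_poly (p ^ m) t u \<alpha>) \<beta>)
      = of_nat t * field_trace (p ^ m) t (u * (\<beta> - \<alpha>))" for u
    using assms(6) field_trace_field_trace[OF char frobenius_period]
    by (simp add: eval Q_fun_def)
  show ?thesis
  proof (intro conjI impI allI)
    show "poly (p_poly (p ^ m) t z \<alpha>) \<beta> = 0"
      using assms(7) by (simp add: eval Q_fun_def)
  next
    fix u assume "p dvd t"
    then have "of_nat t = (0 :: 'a)"
      using assms(2) by (simp add: of_nat_eq_0_iff_char_dvd)
    then show "Q_fun (p ^ m) t \<alpha> \<beta> (poly (p_poly (p ^ m) t u \<alpha>) \<beta>) = 0"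
      and "Q_fun (p ^ m) t \<beta> \<alpha> (poly (p_poly (p ^ m) t u \<alpha>) \<beta>) = 0"
      by (simp_all add: Q_eval Q_fun_swap[OF char, of t \<beta> \<alpha>])
  qed
qed

end
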